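(* A tiling of the unit square by axis-parallel rectangles which is fixed by the dihedral group $D_8$ of symmetries of the square has either $4k$ or $4k+1$ tiles, for some nonnegative integer $k$.
   Context: A tiling of the unit square is a decomposition into finitely many axis-parallel rectangles with disjoint interiors; $D_8$ (order $8$) acts on tilings via the symmetries of the square, and a tiling is fixed if every symmetry maps it to itself. *)

theory Defs
  imports "HOL-Analysis.Analysis"
begin

definition unit_square :: "(real \<times> real) set" where
  "unit_square = {0..1} \<times> {0..1}"

definition is_rectangle :: "(real \<times> real) set \<Rightarrow> bool" where
  "is_rectangle R \<longleftrightarrow> (\<exists>a b c d. a < b \<and> c < d \<and> R = {a..b} \<times> {c..d})"

definition is_tiling :: "(real \<times> real) set set \<Rightarrow> bool" where
  "is_tiling T \<longleftrightarrow> finite T \<and> (\<forall>R\<in>T. is_rectangle R) \<and> \<Union>T = unit_square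
     \<and> (\<forall>R\<in>T. \<forall>S\<in>T. R \<noteq> S \<longrightarrow> interior R \<inter> interior S = {})"

definition D8 :: "(real \<times> real \<Rightarrow> real \<times> real) set" where
  "D8 = {\<lambda>(x,y). (x,y), \<lambda>(x,y). (1-x,y), \<lambda>(x,y). (x,1-y), \<lambda>(x,y). (1-x,1-y),
         \<lambda>(x,y). (y,x), \<lambda>(x,y). (1-y,x), \<lambda>(x,y). (y,1-x), \<lambda>(x,y). (1-y,1-x)}"

definition D8_fixed :: "(real \<times> real) set set \<Rightarrow> bool" where
  "D8_fixed T \<longleftrightarrow> (\<forall>g\<in>D8. (\<lambda>R. g ` R) ` T = T)"

end

theory Submission
  imports Defs
begin

text \<open>The quarter turn of the square permutes the tiles of a D8-fixed tiling with period
  dividing 4. A tile fixed by the half turn is a rectangle symmetric about the centre of the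
  square, so it contains the centre in its interior; as interiors of distinct tiles are
  disjoint, at most one tile is fixed by the half turn. All other orbits of the quarter turn
  therefore have exactly 4 elements.\<close>

lemma card_orbit_of_order_4:
  assumes "f (f (f (f x))) = x" and "f (f x) \<noteq> x"
  shows "card {x, f x, f (f x), f (f (f x))} = 4"
proof -
  have "x \<noteq> f x" and "f x \<noteq> f (f (f x))"
    using assms by metis+
  moreover have "x \<noteq> f (f (f x))" and "f x \<noteq> f (f x)" and "f (f x) \<noteq> f (f (f x))"
    using assms \<open>x \<noteq> f x\<close> by metis+
  ultimately show ?thesis
    using assms(2) by auto
qed

lemma card_mod_4_if_period_4:
  assumes "finite A" and "f ` A \<subseteq> A"
    and "\<And>x. x \<in> A \<Longrightarrow> f (f (f (f x))) = x"
    and "\<And>x y. \<lbrakk>x \<in> A; y \<in> A; f (f x) = x; f (f y) = y\<rbrakk> \<Longrightarrow> x = y"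
  shows "card A mod 4 = 0 \<or> card A mod 4 = 1"
  using assms
proof (induction A rule: finite_psubset_induct)
  case (psubset A)
  show ?case
  proof (cases "\<exists>x\<in>A. f (f x) \<noteq> x")
    case False
    then have "card A \<le> 1"
      using psubset.prems(3) card_le_Suc0_iff_eq[OF psubset.hyps] by auto
    then show ?thesis
      by (cases "card A") auto
  next
    case True
    then obtain x where x: "x \<in> A" "f (f x) \<noteq> x" by blast
    define Orb where "Orb = {x, f x, f (f x), f (f (f x))}"
    have period: "f (f (f (f x))) = x"
      using x psubset.prems(2) by blast
    have Orb_sub: "Orb \<subseteq> A"
      using x psubset.prems(1) by (auto simp: Orb_def)
    have card_Orb: "card Orb = 4"
      unfolding Orb_def using card_orbit_of_order_4[OF period x(2)] .
    have Orb_closed: "f y \<in> Orb \<longleftrightarrow> y \<in> Orb" if "y \<in> A" for y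
    proof
      assume "f y \<in> Orb"
      then have "f (f (f (f y))) \<in> Orb"
        using period by (auto simp: Orb_def)
      then show "y \<in> Orb"
        using psubset.prems(2) that by simp
    qed (use period in \<open>auto simp: Orb_def\<close>)
    have rest: "A - Orb \<subset> A"
      using x by (auto simp: Orb_def)
    have "f ` (A - Orb) \<subseteq> A - Orb"
      using Orb_closed psubset.prems(1) by auto
    then have "card (A - Orb) mod 4 = 0 \<or> card (A - Orb) mod 4 = 1"
      using psubset.IH[OF rest] psubset.prems by blast
    moreover have "card A = card (A - Orb) + 4"
      using card_Diff_subset[OF finite_subset[OF Orb_sub psubset.hyps] Orb_sub]
        card_mono[OF psubset.hyps Orb_sub] card_Orb by linarith
    ultimately show ?thesis
      by auto
  qed
qed

definition quarter_turn :: "real \<times> real \<Rightarrow> real \<times> real" where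
  "quarter_turn = (\<lambda>(x, y). (1 - y, x))"

definition half_turn :: "real \<times> real \<Rightarrow> real \<times> real" where
  "half_turn = (\<lambda>(x, y). (1 - x, 1 - y))"

lemma quarter_turn_in_D8: "quarter_turn \<in> D8"
  unfolding quarter_turn_def D8_def by simp

lemma quarter_turn_twice: "quarter_turn (quarter_turn p) = half_turn p"
  by (cases p) (simp add: quarter_turn_def half_turn_def)

lemma half_turn_involution: "half_turn (half_turn p) = p"
  by (cases p) (simp add: half_turn_def)

lemma centre_in_interior_if_point_symmetric:
  assumes "is_rectangle R" and "(\<lambda>(x, y). (2 * u - x, 2 * v - y)) ` R = R"
  shows "(u, v) \<in> interior R"
proof -
  obtain a b c d where R: "a < b" "c < d" "R = {a..b} \<times> {c..d}"
    using assms(1) unfolding is_rectangle_def by blast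
  have "(a, c) \<in> R" and "(b, d) \<in> R"
    using R by auto
  then have "(2 * u - a, 2 * v - c) \<in> R" and "(2 * u - b, 2 * v - d) \<in> R"
    using assms(2) by (metis (no_types, lifting) case_prod_conv image_eqI)+
  then have "a < u" "u < b" "c < v" "v < d"
    using R by auto
  moreover have "interior R = {a<..<b} \<times> {c<..<d}"
    using R(3) by (simp add: interior_Times)
  ultimately show ?thesis
    by simp
qed

lemma tiling_unique_half_turn_fixed_tile:
  assumes "is_tiling T" and "R \<in> T" "S \<in> T"
    and "half_turn ` R = R" "half_turn ` S = S"
  shows "R = S"
proof -
  have "half_turn = (\<lambda>(x, y). (2 * (1/2) - x, 2 * (1/2) - y))"
    by (simp add: half_turn_def)
  then have "(1/2, 1/2) \<in> interior R \<inter> interior S"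
    using assms centre_in_interior_if_point_symmetric
    by (simp add: is_tiling_def)
  then show ?thesis
    using assms(1-3) unfolding is_tiling_def by blast
qed

theorem lemma10:
  fixes T :: "(real \<times> real) set set"
  assumes "is_tiling T" and "D8_fixed T"
  shows "\<exists>k::nat. card T = 4 * k \<or> card T = 4 * k + 1"
proof -
  let ?f = "\<lambda>R. quarter_turn ` R"
  have twice: "?f (?f R) = half_turn ` R" for R
    by (simp add: image_image quarter_turn_twice)
  have "card T mod 4 = 0 \<or> card T mod 4 = 1"
  proof (rule card_mod_4_if_period_4)
    show "finite T"
      using assms(1) by (simp add: is_tiling_def)
    show "?f ` T \<subseteq> T"
      using assms(2) quarter_turn_in_D8 unfolding D8_fixed_def by blast
    show "?f (?f (?f (?f R))) = R" for R
      by (simp only: twice) (simp add: image_image half_turn_involution)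
    show "R = S" if "R \<in> T" "S \<in> T" "?f (?f R) = R" "?f (?f S) = S" for R S
      using tiling_unique_half_turn_fixed_tile[OF assms(1)] that by (simp add: twice)
  qed
  then show ?thesis
    by (metis div_mult_mod_eq mult.commute add_0_right)
qed

end
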